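(* Let $\phi:\mathbb{R}^d\to\mathbb{R}^k$ be a differentiable feature map with $\sup_{\boldsymbol{x}}\|\phi(\boldsymbol{x})\|_2\le B$ and $\sup_{\boldsymbol{x}}\|J_\phi(\boldsymbol{x})\|_F\le L$, where $J_\phi(\boldsymbol{x})\in\mathbb{R}^{k\times d}$ is the Jacobian. Let $\Lambda>0$ and define $$\mathcal{F}_{\mathrm{unc}} = \{\boldsymbol{x}\mapsto \boldsymbol{W}\phi(\boldsymbol{x}) : \boldsymbol{W}\in\mathbb{R}^{d\times k},\ \|\boldsymbol{W}\|_F\le\Lambda\},\qquad \mathcal{F}_{\mathrm{cons}} = \{\boldsymbol{x}\mapsto J_\phi(\boldsymbol{x})^\top\boldsymbol{w} : \boldsymbol{w}\in\mathbb{R}^k,\ \|\boldsymbol{w}\|_2\le\Lambda\}$$ (the latter being the gradients of the potentials $\boldsymbol{x}\mapsto\boldsymbol{w}^\top\phi(\boldsymbol{x})$). For a sample $S=\{\boldsymbol{x}_1,\dots,\boldsymbol{x}_n\}\subset\mathbb{R}^d$ and a class $\mathcal{F}$ of functions $\mathbb{R}^d\to\mathbb{R}^d$, define the empirical Rademacher complexity $$\hat{\mathfrak{R}}_S(\mathcal{F}) = \frac{1}{n}\mathbb{E}_{\boldsymbol{\sigma}}\left[\sup_{f\in\mathcal{F}}\sum_{i=1}^n\langle\boldsymbol{\sigma}_i, f(\boldsymbol{x}_i)\rangle\right],$$ where $\boldsymbol{\sigma}_1,\dots,\boldsymbol{\sigma}_n$ are independent, each uniformly distributed on $\{-1,1\}^d$.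 Then $$\hat{\mathfrak{R}}_S(\mathcal{F}_{\mathrm{unc}})\le\frac{\Lambda B\sqrt{d}}{\sqrt{n}},\qquad \hat{\mathfrak{R}}_S(\mathcal{F}_{\mathrm{cons}})\le\frac{\Lambda L}{\sqrt{n}}.$$ *)

theory Defs
  imports "HOL-Analysis.Analysis" "HOL-Probability.Probability"
begin

definition frob_norm :: "real^'n^'m \<Rightarrow> real" where
  "frob_norm A = sqrt (\<Sum>i\<in>UNIV. \<Sum>j\<in>UNIV. (A $ i $ j)^2)"

definition sign_vecs :: "(real^'d) set" where
  "sign_vecs = {v. \<forall>j. v $ j \<in> {-1, 1}}"

text \<open>The expectation over independent uniform sigma_i in {-1,1}^d is the
  uniform average over all sign assignments sigma : {0..<n} -> {-1,1}^d.\<close>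
definition emp_rademacher :: "nat \<Rightarrow> (nat \<Rightarrow> real^'d) \<Rightarrow> ((real^'d \<Rightarrow> real^'d) set) \<Rightarrow> real" where
  "emp_rademacher n x F =
     (1 / real n) * measure_pmf.expectation
        (pmf_of_set (PiE {..<n} (\<lambda>_. sign_vecs)))
        (\<lambda>\<sigma>. SUP f\<in>F. \<Sum>i<n. \<sigma> i \<bullet> f (x i))"

definition F_unc :: "(real^'d \<Rightarrow> real^'k) \<Rightarrow> real \<Rightarrow> (real^'d \<Rightarrow> real^'d) set" where
  "F_unc \<phi> \<Lambda> = {(\<lambda>x. W *v \<phi> x) | W :: real^'k^'d. frob_norm W \<le> \<Lambda>}"

definition F_cons :: "(real^'d \<Rightarrow> real^'k) \<Rightarrow> real \<Rightarrow> (real^'d \<Rightarrow> real^'d) set" where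
  "F_cons \<phi> \<Lambda> = {(\<lambda>x. transpose (jacobian \<phi> (at x)) *v w) | w :: real^'k. norm w \<le> \<Lambda>}"

end

theory Submission
  imports Defs
begin

text \<open>Both classes are linear in a parameter of norm at most \<open>\<Lambda>\<close>: for \<open>f\<close> with parameter \<open>w\<close>,
  \<open>\<Sum>\<^sub>i \<sigma>\<^sub>i \<bullet> f x\<^sub>i = w \<bullet> V \<sigma>\<close> with \<open>V \<sigma> = \<Sum>\<^sub>i\<^sub>j \<sigma>\<^sub>i\<^sub>j a\<^sub>i\<^sub>j\<close>, where \<open>a\<^sub>i\<^sub>j\<close> is the matrix
  with \<open>\<phi> x\<^sub>i\<close> as \<open>j\<close>-th row, resp. the \<open>j\<close>-th column of the Jacobian at \<open>x\<^sub>i\<close>.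
  By Cauchy-Schwarz the supremum over the class is at most \<open>\<Lambda> \<parallel>V \<sigma>\<parallel>\<close>, and by Jensen
  \<open>E \<parallel>V \<sigma>\<parallel> \<le> sqrt (E \<parallel>V \<sigma>\<parallel>\<^sup>2)\<close>. The signs \<open>\<sigma>\<^sub>i\<^sub>j\<close> are orthonormal, so
  \<open>E \<parallel>V \<sigma>\<parallel>\<^sup>2 = \<Sum>\<^sub>i\<^sub>j \<parallel>a\<^sub>i\<^sub>j\<parallel>\<^sup>2\<close>, which is at most \<open>n d B\<^sup>2\<close> resp. \<open>n L\<^sup>2\<close>.\<close>

abbreviation sign_assignments :: "nat \<Rightarrow> (nat \<Rightarrow> real^'d) set" where
  "sign_assignments n \<equiv> PiE {..<n} (\<lambda>_. sign_vecs)"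

lemma finite_sign_vecs: "finite sign_vecs"
proof (rule finite_subset)
  show "sign_vecs \<subseteq> vec_lambda ` PiE UNIV (\<lambda>_. {-1, 1})"
    by (auto simp: sign_vecs_def intro!: image_eqI[of _ vec_lambda, OF vec_nth_inverse[symmetric]])
qed (auto intro!: finite_PiE)

lemma finite_sign_assignments: "finite (sign_assignments n)"
  by (simp add: finite_PiE finite_sign_vecs)

lemma sign_assignments_nonempty: "sign_assignments n \<noteq> {}"
proof -
  have "(\<chi> j. 1) \<in> sign_vecs" by (simp add: sign_vecs_def)
  then show ?thesis by (auto simp: PiE_eq_empty_iff)
qed

lemma emp_rademacher_eq_average:
  fixes x :: "nat \<Rightarrow> real^'d"
  shows "emp_rademacher n x F =
    (\<Sum>\<sigma>\<in>sign_assignments n. SUP f\<in>F. \<Sum>i<n. \<sigma> i \<bullet> f (x i)) /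
      (real n * card (sign_assignments n :: (nat \<Rightarrow> real^'d) set))"
  by (simp add: emp_rademacher_def integral_pmf_of_set finite_sign_assignments sign_assignments_nonempty)

text \<open>Flipping the single sign \<open>\<sigma> i $ j\<close> is an involution of the sign assignments that
  negates every product in which \<open>\<sigma> i $ j\<close> occurs exactly once.\<close>
lemma sum_sign_assignments_mult:
  fixes j j' :: "'d::finite"
  assumes "i < n" "i' < n"
  shows "(\<Sum>\<sigma>\<in>sign_assignments n. \<sigma> i $ j * \<sigma> i' $ j') =
    (if (i, j) = (i', j') then real (card (sign_assignments n :: (nat \<Rightarrow> real^'d) set)) else 0)"
proof (cases "(i, j) = (i', j')")
  case True
  have "\<sigma> i $ j * \<sigma> i $ j = 1" if "\<sigma> \<in> sign_assignments n" for \<sigma> :: "nat \<Rightarrow> real^'d"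
  proof -
    have "\<sigma> i $ j \<in> {-1, 1}" using that assms by (auto simp: sign_vecs_def PiE_iff)
    then show ?thesis by auto
  qed
  with True show ?thesis by simp
next
  case False
  define flip where "flip \<sigma> = \<sigma>(i := (\<chi> k. if k = j then - \<sigma> i $ k else \<sigma> i $ k))"
    for \<sigma> :: "nat \<Rightarrow> real^'d"
  define g where "g \<sigma> = \<sigma> i $ j * \<sigma> i' $ j'" for \<sigma> :: "nat \<Rightarrow> real^'d"
  have flip_flip: "flip (flip \<sigma>) = \<sigma>" for \<sigma>
    by (auto simp: flip_def vec_eq_iff)
  have flip_mem: "flip \<sigma> \<in> sign_assignments n" if "\<sigma> \<in> sign_assignments n" for \<sigma>
    using that assms by (auto simp: flip_def sign_vecs_def PiE_iff extensional_def)
  have g_flip: "g (flip \<sigma>) = - g \<sigma>" for \<sigma>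
    using False by (auto simp: g_def flip_def)
  have "(\<Sum>\<sigma>\<in>sign_assignments n. g \<sigma>) = (\<Sum>\<sigma>\<in>sign_assignments n. g (flip \<sigma>))"
    by (rule sum.reindex_bij_witness[of _ flip flip]) (auto simp: flip_flip flip_mem)
  also have "\<dots> = - (\<Sum>\<sigma>\<in>sign_assignments n. g \<sigma>)"
    by (simp add: g_flip sum_negf)
  finally have "(\<Sum>\<sigma>\<in>sign_assignments n. g \<sigma>) = 0" by simp
  then show ?thesis unfolding if_not_P[OF False] by (simp add: g_def)
qed

lemma sum_sign_assignments_norm_squared:
  fixes a :: "nat \<Rightarrow> 'd::finite \<Rightarrow> 'v::real_inner"
  shows "(\<Sum>\<sigma>\<in>sign_assignments n. (norm (\<Sum>i<n. \<Sum>j\<in>UNIV. \<sigma> i $ j *\<^sub>R a i j))\<^sup>2) =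
    card (sign_assignments n :: (nat \<Rightarrow> real^'d) set) * (\<Sum>i<n. \<Sum>j\<in>UNIV. (norm (a i j))\<^sup>2)"
proof -
  define P where "P = {..<n} \<times> (UNIV :: 'd set)"
  define N where "N = real (card (sign_assignments n :: (nat \<Rightarrow> real^'d) set))"
  define s where "s \<sigma> p = \<sigma> (fst p) $ snd p" for \<sigma> :: "nat \<Rightarrow> real^'d" and p
  define b where "b p = a (fst p) (snd p)" for p
  have comb: "(\<Sum>i<n. \<Sum>j\<in>UNIV. \<sigma> i $ j *\<^sub>R a i j) = (\<Sum>p\<in>P. s \<sigma> p *\<^sub>R b p)" for \<sigma>
    by (simp add: P_def s_def b_def sum.cartesian_product case_prod_beta)
  have orth: "(\<Sum>\<sigma>\<in>sign_assignments n. s \<sigma> p * s \<sigma> q) = (if p = q then N else 0)"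
    if "p \<in> P" "q \<in> P" for p q
    using that sum_sign_assignments_mult[of "fst p" n "fst q" "snd p" "snd q"]
    by (auto simp: P_def s_def N_def prod_eq_iff)
  have "(\<Sum>\<sigma>\<in>sign_assignments n. (norm (\<Sum>p\<in>P. s \<sigma> p *\<^sub>R b p))\<^sup>2) =
        (\<Sum>\<sigma>\<in>sign_assignments n. \<Sum>p\<in>P. \<Sum>q\<in>P. (s \<sigma> p * s \<sigma> q) * (b q \<bullet> b p))"
    by (simp add: power2_norm_eq_inner inner_sum_left inner_sum_right sum_distrib_left mult.assoc)
  also have "\<dots> = (\<Sum>p\<in>P. \<Sum>q\<in>P. (\<Sum>\<sigma>\<in>sign_assignments n. s \<sigma> p * s \<sigma> q) * (b q \<bullet> b p))"
    by (simp add: sum_distrib_right sum.swap[of _ "sign_assignments n"])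
  also have "\<dots> = (\<Sum>p\<in>P. N * (b p \<bullet> b p))"
    by (simp add: orth if_distrib if_distribR P_def cong: sum.cong if_cong)
  also have "\<dots> = N * (\<Sum>i<n. \<Sum>j\<in>UNIV. (norm (a i j))\<^sup>2)"
    by (simp add: P_def b_def sum_distrib_left sum.cartesian_product power2_norm_eq_inner case_prod_beta)
  finally show ?thesis by (simp add: comb N_def)
qed

lemma emp_rademacher_le_of_inner_representation:
  fixes x :: "nat \<Rightarrow> real^'d" and a :: "nat \<Rightarrow> 'd \<Rightarrow> 'v::real_inner" and \<Lambda> C :: real
  assumes "n > 0" and "F \<noteq> {}" and "C \<ge> 0"
    and rep: "\<forall>f\<in>F. \<exists>w. norm w \<le> \<Lambda> \<and>
      (\<forall>\<sigma>. (\<Sum>i<n. \<sigma> i \<bullet> f (x i)) = w \<bullet> (\<Sum>i<n. \<Sum>j\<in>UNIV. \<sigma> i $ j *\<^sub>R a i j))"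
    and bound: "(\<Sum>i<n. \<Sum>j\<in>UNIV. (norm (a i j))\<^sup>2) \<le> n * C\<^sup>2"
  shows "emp_rademacher n x F \<le> \<Lambda> * C / sqrt n"
proof -
  define S where "S = (sign_assignments n :: (nat \<Rightarrow> real^'d) set)"
  define N where "N = real (card S)"
  define V where "V \<sigma> = (\<Sum>i<n. \<Sum>j\<in>UNIV. \<sigma> i $ j *\<^sub>R a i j)" for \<sigma> :: "nat \<Rightarrow> real^'d"
  have "N > 0"
    by (simp add: N_def S_def card_gt_0_iff finite_sign_assignments sign_assignments_nonempty)
  from \<open>F \<noteq> {}\<close> obtain f0 where "f0 \<in> F" by blast
  with rep have "\<Lambda> \<ge> 0" by (meson norm_ge_zero order_trans)
  have sup_le: "(SUP f\<in>F. \<Sum>i<n. \<sigma> i \<bullet> f (x i)) \<le> \<Lambda> * norm (V \<sigma>)" for \<sigma>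
  proof (rule cSUP_least[OF \<open>F \<noteq> {}\<close>])
    fix f assume "f \<in> F"
    then obtain w where "norm w \<le> \<Lambda>" and "(\<Sum>i<n. \<sigma> i \<bullet> f (x i)) = w \<bullet> V \<sigma>"
      using rep unfolding V_def by blast
    moreover have "w \<bullet> V \<sigma> \<le> norm w * norm (V \<sigma>)" by (rule norm_cauchy_schwarz)
    ultimately show "(\<Sum>i<n. \<sigma> i \<bullet> f (x i)) \<le> \<Lambda> * norm (V \<sigma>)"
      by (metis mult_right_mono norm_ge_zero order_trans)
  qed
  have "(\<Sum>\<sigma>\<in>S. norm (V \<sigma>)) \<le> sqrt (N * (\<Sum>\<sigma>\<in>S. (norm (V \<sigma>))\<^sup>2))"
    using sum_squared_le_sum_of_squares[of "\<lambda>\<sigma>. norm (V \<sigma>)" S]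
    by (simp add: N_def real_le_rsqrt mult.commute)
  also have "\<dots> = N * sqrt (\<Sum>i<n. \<Sum>j\<in>UNIV. (norm (a i j))\<^sup>2)"
    using \<open>N > 0\<close>
    by (simp add: S_def N_def V_def sum_sign_assignments_norm_squared real_sqrt_mult
        flip: power2_eq_square)
  also have "\<dots> \<le> N * (sqrt n * C)"
    using real_sqrt_le_mono[OF bound] \<open>N > 0\<close> \<open>C \<ge> 0\<close> by (simp add: real_sqrt_mult)
  finally have sum_norms: "(\<Sum>\<sigma>\<in>S. norm (V \<sigma>)) \<le> N * (sqrt n * C)" .
  have "emp_rademacher n x F \<le> (\<Sum>\<sigma>\<in>S. \<Lambda> * norm (V \<sigma>)) / (n * N)"
    unfolding emp_rademacher_eq_average S_def N_def
    by (intro divide_right_mono sum_mono sup_le) simp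
  also have "\<dots> \<le> \<Lambda> * (N * (sqrt n * C)) / (n * N)"
    unfolding sum_distrib_left[symmetric]
    using sum_norms \<open>\<Lambda> \<ge> 0\<close> \<open>N > 0\<close> by (intro divide_right_mono mult_left_mono) simp_all
  also have "\<dots> = \<Lambda> * C / sqrt n"
    using \<open>N > 0\<close> \<open>n > 0\<close> by (simp add: field_simps flip: real_sqrt_mult_self[of n])
  finally show ?thesis .
qed

lemma frob_norm_eq_norm: "frob_norm A = norm A"
  by (simp add: frob_norm_def norm_vec_def L2_set_def real_norm_def sum_nonneg)

lemma norm_axis: "norm (axis j (v :: 'a::real_inner)) = norm v"
  by (simp add: norm_eq_sqrt_inner inner_axis_axis)

lemma sum_norm_column_squared:
  "(\<Sum>j\<in>UNIV. (norm (column j A))\<^sup>2) = (frob_norm (A :: real^'n^'m))\<^sup>2"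
proof -
  have "(\<Sum>j\<in>UNIV. (norm (column j A))\<^sup>2) = (\<Sum>j\<in>UNIV. \<Sum>i\<in>UNIV. (A $ i $ j)\<^sup>2)"
    unfolding column_def power2_norm_eq_inner inner_vec_def by (simp add: power2_eq_square)
  also have "\<dots> = (\<Sum>i\<in>UNIV. \<Sum>j\<in>UNIV. (A $ i $ j)\<^sup>2)"
    by (rule sum.swap)
  finally show ?thesis by (simp add: frob_norm_def sum_nonneg)
qed

lemma inner_matrix_vector_mult_eq_inner_axis:
  fixes W :: "real^'k^'d"
  shows "\<sigma> \<bullet> (W *v v) = W \<bullet> (\<Sum>j\<in>UNIV. \<sigma> $ j *\<^sub>R axis j v)"
  unfolding inner_sum_right inner_scaleR_right inner_axis
  by (simp add: inner_vec_def matrix_vector_mult_def sum_distrib_left)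

lemma inner_transpose_matrix_vector_mult_eq_inner_columns:
  fixes A :: "real^'d^'k"
  shows "\<sigma> \<bullet> (transpose A *v w) = w \<bullet> (\<Sum>j\<in>UNIV. \<sigma> $ j *\<^sub>R column j A)"
proof -
  have "\<sigma> \<bullet> (transpose A *v w) = (A *v \<sigma>) \<bullet> w"
    by (metis dot_lmul_matrix vector_transpose_matrix)
  also have "A *v \<sigma> = (\<Sum>j\<in>UNIV. \<sigma> $ j *\<^sub>R column j A)"
    by (simp add: matrix_mult_sum scalar_mult_eq_scaleR)
  finally show ?thesis by (simp add: inner_commute)
qed

lemma F_unc_inner_representation:
  fixes \<phi> :: "real^'d \<Rightarrow> real^'k"
  shows "\<forall>f\<in>F_unc \<phi> \<Lambda>. \<exists>W. norm W \<le> \<Lambda> \<and>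
    (\<forall>\<sigma>. (\<Sum>i<n. \<sigma> i \<bullet> f (x i)) = W \<bullet> (\<Sum>i<n. \<Sum>j\<in>UNIV. \<sigma> i $ j *\<^sub>R axis j (\<phi> (x i))))"
  by (auto simp: F_unc_def frob_norm_eq_norm inner_matrix_vector_mult_eq_inner_axis inner_sum_right)

lemma F_cons_inner_representation:
  fixes \<phi> :: "real^'d \<Rightarrow> real^'k"
  shows "\<forall>f\<in>F_cons \<phi> \<Lambda>. \<exists>w. norm w \<le> \<Lambda> \<and>
    (\<forall>\<sigma>. (\<Sum>i<n. \<sigma> i \<bullet> f (x i)) =
      w \<bullet> (\<Sum>i<n. \<Sum>j\<in>UNIV. \<sigma> i $ j *\<^sub>R column j (jacobian \<phi> (at (x i)))))"
  unfolding F_cons_def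
  by (auto simp: inner_transpose_matrix_vector_mult_eq_inner_columns inner_sum_right
      simp del: transpose_matrix_vector)

lemma emp_rademacher_F_unc_le:
  fixes \<phi> :: "real^'d \<Rightarrow> real^'k" and x :: "nat \<Rightarrow> real^'d"
  assumes "n > 0" and "\<Lambda> \<ge> 0" and bound: "\<And>i. i < n \<Longrightarrow> norm (\<phi> (x i)) \<le> B"
  shows "emp_rademacher n x (F_unc \<phi> \<Lambda>) \<le> \<Lambda> * B * sqrt CARD('d) / sqrt n"
proof -
  have "B \<ge> 0" using bound[of 0] \<open>n > 0\<close> norm_ge_zero order_trans by blast
  have "F_unc \<phi> \<Lambda> \<noteq> {}"
    using \<open>\<Lambda> \<ge> 0\<close> by (auto simp: F_unc_def frob_norm_eq_norm intro!: exI[of _ 0])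
  have "(\<Sum>i<n. \<Sum>j\<in>UNIV. (norm (axis j (\<phi> (x i)) :: real^'k^'d))\<^sup>2) =
        CARD('d) * (\<Sum>i<n. (norm (\<phi> (x i)))\<^sup>2)"
    by (simp add: norm_axis sum_distrib_left)
  also have "\<dots> \<le> CARD('d) * (\<Sum>i<n. B\<^sup>2)"
    using bound \<open>B \<ge> 0\<close> by (intro mult_left_mono sum_mono power_mono) auto
  also have "\<dots> = n * (sqrt CARD('d) * B)\<^sup>2"
    by (simp add: power_mult_distrib)
  finally have "emp_rademacher n x (F_unc \<phi> \<Lambda>) \<le> \<Lambda> * (sqrt CARD('d) * B) / sqrt n"
    using \<open>B \<ge> 0\<close>
    by (intro emp_rademacher_le_of_inner_representation[OF \<open>n > 0\<close> \<open>F_unc \<phi> \<Lambda> \<noteq> {}\<close> _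
          F_unc_inner_representation]) simp_all
  then show ?thesis by (simp add: mult_ac)
qed

lemma emp_rademacher_F_cons_le:
  fixes \<phi> :: "real^'d \<Rightarrow> real^'k" and x :: "nat \<Rightarrow> real^'d"
  assumes "n > 0" and "\<Lambda> \<ge> 0"
    and bound: "\<And>i. i < n \<Longrightarrow> frob_norm (jacobian \<phi> (at (x i))) \<le> L"
  shows "emp_rademacher n x (F_cons \<phi> \<Lambda>) \<le> \<Lambda> * L / sqrt n"
proof -
  have "L \<ge> 0" using bound[of 0] \<open>n > 0\<close> frob_norm_eq_norm norm_ge_zero order_trans by metis
  have "F_cons \<phi> \<Lambda> \<noteq> {}"
    using \<open>\<Lambda> \<ge> 0\<close> by (auto simp: F_cons_def intro!: exI[of _ 0])
  have "(\<Sum>i<n. \<Sum>j\<in>UNIV. (norm (column j (jacobian \<phi> (at (x i)))))\<^sup>2) =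
        (\<Sum>i<n. (frob_norm (jacobian \<phi> (at (x i))))\<^sup>2)"
    by (simp add: sum_norm_column_squared)
  also have "\<dots> \<le> (\<Sum>i<n. L\<^sup>2)"
    using bound by (intro sum_mono power_mono) (auto simp: frob_norm_eq_norm)
  also have "\<dots> = n * L\<^sup>2" by simp
  finally show ?thesis
    by (rule emp_rademacher_le_of_inner_representation
        [OF \<open>n > 0\<close> \<open>F_cons \<phi> \<Lambda> \<noteq> {}\<close> \<open>L \<ge> 0\<close> F_cons_inner_representation])
qed

theorem theorem3p6:
  fixes \<phi> :: "real^'d \<Rightarrow> real^'k"
    and B L \<Lambda> :: real and n :: nat and x :: "nat \<Rightarrow> real^'d"
  assumes diff: "\<And>z. \<phi> differentiable (at z)"
    and bndB: "\<And>z. norm (\<phi> z) \<le> B"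
    and bndL: "\<And>z. frob_norm (jacobian \<phi> (at z)) \<le> L"
    and Lpos: "\<Lambda> > 0"
    and npos: "n > 0"
  shows "emp_rademacher n x (F_unc \<phi> \<Lambda>) \<le> \<Lambda> * B * sqrt (real CARD('d)) / sqrt (real n)
       \<and> emp_rademacher n x (F_cons \<phi> \<Lambda>) \<le> \<Lambda> * L / sqrt (real n)"
  using Lpos npos bndB bndL by (intro conjI emp_rademacher_F_unc_le emp_rademacher_F_cons_le) auto

end
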